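(* Let $\mathscr{V}_3$ be the variety of triples $(\mathcal{C}_1,\mathcal{C}_2,\mathcal{C}_3)$ of conics in $\mathbb{P}^3$ (over $\mathbb{C}$) that lie on a common nondegenerate quadric surface. For $\{i,j,k\}=\{1,2,3\}$ define the rational function $\alpha_i^2$ on $\mathscr{V}_3$ by $$\alpha_i^2=\frac{(\boldsymbol{\ell}_{ij}^T C_i^{*}\boldsymbol{\ell}_{ik})^2}{(\boldsymbol{\ell}_{ij}^T C_i^{*}\boldsymbol{\ell}_{ij})(\boldsymbol{\ell}_{ik}^T C_i^{*}\boldsymbol{\ell}_{ik})},$$ where, after choosing homogeneous coordinates identifying the plane $\mathcal{P}_i$ of $\mathcal{C}_i$ with $\mathbb{P}^2$, $C_i$ is a symmetric $3\times3$ matrix of $\mathcal{C}_i$, $C_i^{*}$ is its adjugate, and $\boldsymbol{\ell}_{ij},\boldsymbol{\ell}_{ik}\in\mathbb{C}^3$ are coordinate vectors of the lines $\mathcal{P}_i\cap\mathcal{P}_j$ and $\mathcal{P}_i\cap\mathcal{P}_k$ in $\mathcal{P}_i$ (the value does not depend on these choices). Then $\alpha_1^2,\alpha_2^2,\alpha_3^2$ are algebraically independent over $\mathbb{C}$.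
   Context: A conic in $\mathbb{P}^3$ is a nondegenerate conic lying in a plane; here the three planes $\mathcal{P}_1,\mathcal{P}_2,\mathcal{P}_3$ are the planes of the three conics. A line $\boldsymbol{\ell}$ in $\mathbb{P}^2$ is represented by $\boldsymbol{\ell}\in\mathbb{C}^3$ with the line being $\{\bar{x}:\boldsymbol{\ell}^T\bar{x}=0\}$; $\boldsymbol{\ell}^TC^*\boldsymbol{\ell}=0$ iff $\boldsymbol{\ell}$ is tangent to the conic $\bar{x}^TC\bar{x}=0$. A nondegenerate quadric surface is the zero set of a quadratic form in 4 variables with nonsingular matrix. *)

theory Defs
  imports "HOL-Analysis.Analysis"
begin

definition bform :: "complex^'n \<Rightarrow> complex^'n^'n \<Rightarrow> complex^'n \<Rightarrow> complex" where
  "bform x A y = (\<Sum>i\<in>UNIV. \<Sum>j\<in>UNIV. x$i * A$i$j * y$j)"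

definition lform :: "complex^'n \<Rightarrow> complex^'n \<Rightarrow> complex" where
  "lform l x = (\<Sum>i\<in>UNIV. l$i * x$i)"

text \<open>Adjugate (transposed cofactor matrix) of a 3x3 matrix, written out via the
  cyclic cofactor formula (indices of type 3 are taken mod 3).\<close>
definition adj3 :: "complex^3^3 \<Rightarrow> complex^3^3" where
  "adj3 A = (\<chi> i j. A$(j+1)$(i+1) * A$(j+2)$(i+2) - A$(j+1)$(i+2) * A$(j+2)$(i+1))"

text \<open>A plane of P^3 with homogeneous coordinates: an injective linear map C^3 -> C^4
  (a 4x3 matrix of rank 3), whose image is the plane.\<close>
definition plane_param :: "complex^3^4 \<Rightarrow> bool" where
  "plane_param M \<longleftrightarrow> (\<forall>x. M *v x = 0 \<longrightarrow> x = 0)"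

definition nondeg_conic :: "complex^3^3 \<Rightarrow> bool" where
  "nondeg_conic C \<longleftrightarrow> transpose C = C \<and> det C \<noteq> 0"

definition nondeg_quadric :: "complex^4^4 \<Rightarrow> bool" where
  "nondeg_quadric Q \<longleftrightarrow> transpose Q = Q \<and> det Q \<noteq> 0"

definition conic_on_quadric :: "complex^3^4 \<Rightarrow> complex^3^3 \<Rightarrow> complex^4^4 \<Rightarrow> bool" where
  "conic_on_quadric M C Q \<longleftrightarrow>
     (\<forall>x. x \<noteq> 0 \<and> bform x C x = 0 \<longrightarrow> bform (M *v x) Q (M *v x) = 0)"

text \<open>l (in the coordinates of the plane parametrised by Mi) is a coordinate vector of the
  line Pi \<inter> Pj, i.e. its zero set in Pi is exactly the intersection with Pj.\<close>
definition isect_line :: "complex^3^4 \<Rightarrow> complex^3^4 \<Rightarrow> complex^3 \<Rightarrow> bool" where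
  "isect_line Mi Mj l \<longleftrightarrow> l \<noteq> 0 \<and> (\<forall>x. lform l x = 0 \<longleftrightarrow> (\<exists>y. Mi *v x = Mj *v y))"

definition alpha_sq :: "complex^3^3 \<Rightarrow> complex^3 \<Rightarrow> complex^3 \<Rightarrow> complex" where
  "alpha_sq C l m = (bform l (adj3 C) m)^2 / (bform l (adj3 C) l * bform m (adj3 C) m)"

definition alpha_defined :: "complex^3^3 \<Rightarrow> complex^3 \<Rightarrow> complex^3 \<Rightarrow> bool" where
  "alpha_defined C l m \<longleftrightarrow> bform l (adj3 C) l * bform m (adj3 C) m \<noteq> 0"

definition V3_data ::
  "complex^4^4 \<Rightarrow> complex^3^4 \<Rightarrow> complex^3^4 \<Rightarrow> complex^3^4 \<Rightarrow>
   complex^3^3 \<Rightarrow> complex^3^3 \<Rightarrow> complex^3^3 \<Rightarrow>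
   complex^3 \<Rightarrow> complex^3 \<Rightarrow> complex^3 \<Rightarrow> complex^3 \<Rightarrow> complex^3 \<Rightarrow> complex^3 \<Rightarrow> bool" where
  "V3_data Q M1 M2 M3 C1 C2 C3 l12 l13 l21 l23 l31 l32 \<longleftrightarrow>
     nondeg_quadric Q \<and>
     plane_param M1 \<and> plane_param M2 \<and> plane_param M3 \<and>
     nondeg_conic C1 \<and> nondeg_conic C2 \<and> nondeg_conic C3 \<and>
     conic_on_quadric M1 C1 Q \<and> conic_on_quadric M2 C2 Q \<and> conic_on_quadric M3 C3 Q \<and>
     isect_line M1 M2 l12 \<and> isect_line M1 M3 l13 \<and>
     isect_line M2 M1 l21 \<and> isect_line M2 M3 l23 \<and>
     isect_line M3 M1 l31 \<and> isect_line M3 M2 l32 \<and>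
     alpha_defined C1 l12 l13 \<and> alpha_defined C2 l21 l23 \<and> alpha_defined C3 l31 l32"

definition poly3_eval :: "(nat\<times>nat\<times>nat) set \<Rightarrow> (nat\<times>nat\<times>nat \<Rightarrow> complex) \<Rightarrow>
    complex \<Rightarrow> complex \<Rightarrow> complex \<Rightarrow> complex" where
  "poly3_eval S c x y z = (\<Sum>(a,b,d)\<in>S. c (a,b,d) * x^a * y^b * z^d)"

end

theory Submission
  imports Defs "HOL-Computational_Algebra.Polynomial"
begin

text \<open>It suffices to exhibit a three-parameter family in V_3 along which
  (alpha_1^2, alpha_2^2, alpha_3^2) fills a real box. Take the quadric
  X_1^2 + X_2^2 + X_3^2 + X_4^2 + 2a X_1 X_2 + 2b X_1 X_3 + 2c X_2 X_3 and its sections by the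
  coordinate planes X_1 = 0, X_2 = 0, X_3 = 0. Each section is a conic x^2 + y^2 + z^2 + 2t xy
  meeting the other two planes in the lines x = 0 and y = 0, so its alpha^2 is t^2. Hence the
  alphas are (c^2, b^2, a^2), which covers (0, 1/4)^3 as a, b, c range over (0, 1/2). A polynomial
  vanishing on a box is zero: the Kronecker substitution (r, r^N, r^(N^2)) turns it into a
  univariate polynomial with infinitely many roots.\<close>

lemma sum_monomials_eq_0_imp_coeffs_eq_0:
  fixes c :: "'e \<Rightarrow> 'a::idom" and deg :: "'e \<Rightarrow> nat"
  assumes "finite S" and "inj_on deg S" and "infinite T"
    and vanish: "\<And>t. t \<in> T \<Longrightarrow> (\<Sum>e\<in>S. c e * t ^ deg e) = 0"
  shows "\<forall>e\<in>S. c e = 0"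
proof
  fix e0 assume "e0 \<in> S"
  define p where "p = (\<Sum>e\<in>S. monom (c e) (deg e))"
  have "T \<subseteq> {t. poly p t = 0}"
    using vanish by (auto simp: p_def poly_sum poly_monom)
  then have "p = 0"
    using \<open>infinite T\<close> poly_roots_finite finite_subset by blast
  have "coeff p (deg e0) = (\<Sum>e\<in>S. if e = e0 then c e else 0)"
    unfolding p_def coeff_sum coeff_monom
    using \<open>inj_on deg S\<close> \<open>e0 \<in> S\<close> by (intro sum.cong) (auto simp: inj_on_def)
  also have "\<dots> = c e0"
    using \<open>finite S\<close> \<open>e0 \<in> S\<close> by simp
  finally show "c e0 = 0"
    using \<open>p = 0\<close> by simp
qed

lemma add_mult_base_inject:
  fixes a a' k k' N :: nat
  assumes "a < N" "a' < N" "a + N * k = a' + N * k'"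
  shows "a = a' \<and> k = k'"
proof -
  have "a = a'"
    using arg_cong[OF assms(3), of "\<lambda>n. n mod N"] assms(1,2) by simp
  moreover have "k = k'"
    using assms \<open>a = a'\<close> by simp
  ultimately show ?thesis ..
qed

lemma inj_on_base_encoding:
  fixes N :: nat
  assumes "\<forall>(a, b, d)\<in>S. a < N \<and> b < N \<and> d < N"
  shows "inj_on (\<lambda>(a, b, d). a + N * (b + N * d)) S"
proof (rule inj_onI, clarsimp)
  fix a b d a' b' d'
  assume "(a, b, d) \<in> S" "(a', b', d') \<in> S" and eq: "a + N * (b + N * d) = a' + N * (b' + N * d')"
  then have "a < N" "b < N" "d < N" "a' < N" "b' < N" "d' < N"
    using assms by auto
  with eq show "a = a' \<and> b = b' \<and> d = d'"
    using add_mult_base_inject by metis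
qed

lemma poly3_eval_eq_0_on_box_imp_coeffs_eq_0:
  assumes "finite S" and "0 < \<epsilon>"
    and vanish: "\<And>x y z. x \<in> {0<..<\<epsilon>} \<Longrightarrow> y \<in> {0<..<\<epsilon>} \<Longrightarrow> z \<in> {0<..<\<epsilon>} \<Longrightarrow>
      poly3_eval S c (of_real x) (of_real y) (of_real z) = 0"
  shows "\<forall>e\<in>S. c e = 0"
proof -
  define N where "N = Suc (\<Sum>(a, b, d)\<in>S. a + b + d)"
  have bound: "\<forall>(a, b, d)\<in>S. a < N \<and> b < N \<and> d < N"
  proof clarify
    fix a b d assume "(a, b, d) \<in> S"
    then have "a + b + d \<le> (\<Sum>(a, b, d)\<in>S. a + b + d)"
      using member_le_sum[OF _ _ \<open>finite S\<close>, of "(a, b, d)" "\<lambda>(a, b, d). a + b + d"] by auto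
    then show "a < N \<and> b < N \<and> d < N"
      unfolding N_def by linarith
  qed
  have "1 \<le> N"
    by (simp add: N_def)
  \<comment> \<open>the monomial x^a y^b z^d at (r, r^N, r^(N*N)) is r^(deg (a, b, d))\<close>
  define deg where "deg = (\<lambda>(a, b, d). a + N * (b + N * d))"
  define \<delta> where "\<delta> = min \<epsilon> 1"
  have "infinite {0<..<\<delta>}"
    using \<open>0 < \<epsilon>\<close> by (simp add: \<delta>_def)
  then have infinite_T: "infinite (complex_of_real ` {0<..<\<delta>})"
    using finite_imageD inj_on_subset[OF inj_of_real] by blast
  have "inj_on deg S"
    unfolding deg_def using bound by (rule inj_on_base_encoding)
  then show ?thesis
  proof (rule sum_monomials_eq_0_imp_coeffs_eq_0[OF \<open>finite S\<close> _ infinite_T])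
    fix t assume "t \<in> complex_of_real ` {0<..<\<delta>}"
    then obtain r where r: "r \<in> {0<..<\<delta>}" and t: "t = of_real r" by blast
    have power_in_box: "r ^ k \<in> {0<..<\<epsilon>}" if "1 \<le> k" for k
    proof -
      have "r ^ k \<le> r ^ 1"
        using r that by (intro power_decreasing) (auto simp: \<delta>_def)
      then show ?thesis
        using r by (auto simp: \<delta>_def)
    qed
    have "0 = poly3_eval S c (of_real r) (of_real (r ^ N)) (of_real (r ^ (N * N)))"
      using power_in_box[of 1] power_in_box[of N] power_in_box[of "N * N"] \<open>1 \<le> N\<close>
      by (intro vanish[symmetric]) auto
    also have "\<dots> = (\<Sum>e\<in>S. c e * t ^ deg e)"
      unfolding poly3_eval_def deg_def t
      by (intro sum.cong) (auto simp: power_add power_mult mult.assoc)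
    finally show "(\<Sum>e\<in>S. c e * t ^ deg e) = 0" ..
  qed
qed

lemma lform_axis: "lform (axis k 1) x = x $ k"
  by (simp add: lform_def axis_def mult_if_delta)

lemma bform_axis: "bform (axis i 1) A (axis j 1) = A $ i $ j"
  by (simp add: bform_def axis_def mult_if_delta if_distrib[of "\<lambda>u. _ * u"] cong: if_cong)

lemma isect_lineI:
  assumes "l \<noteq> 0" and "range ((*v) Mj) = {X. X $ k = 0}" and "\<And>x. (Mi *v x) $ k = lform l x"
  shows "isect_line Mi Mj l"
  unfolding isect_line_def
proof (intro conjI allI \<open>l \<noteq> 0\<close>)
  fix x
  have "(\<exists>y. Mi *v x = Mj *v y) \<longleftrightarrow> Mi *v x \<in> range ((*v) Mj)"
    by (auto simp: eq_commute)
  then show "lform l x = 0 \<longleftrightarrow> (\<exists>y. Mi *v x = Mj *v y)"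
    using assms(2,3) by simp
qed

lemma conic_on_quadricI:
  assumes "\<And>x. bform (M *v x) Q (M *v x) = bform x C x"
  shows "conic_on_quadric M C Q"
  using assms by (simp add: conic_on_quadric_def)

lemma det_4:
  fixes A :: "'a::comm_ring_1^4^4"
  shows "det A =
 A$1$1*A$2$2*A$3$3*A$4$4 - A$1$1*A$2$2*A$3$4*A$4$3 - A$1$1*A$2$3*A$3$2*A$4$4 + A$1$1*A$2$3*A$3$4*A$4$2
 + A$1$1*A$2$4*A$3$2*A$4$3 - A$1$1*A$2$4*A$3$3*A$4$2
 - A$1$2*A$2$1*A$3$3*A$4$4 + A$1$2*A$2$1*A$3$4*A$4$3 + A$1$2*A$2$3*A$3$1*A$4$4 - A$1$2*A$2$3*A$3$4*A$4$1
 - A$1$2*A$2$4*A$3$1*A$4$3 + A$1$2*A$2$4*A$3$3*A$4$1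
 + A$1$3*A$2$1*A$3$2*A$4$4 - A$1$3*A$2$1*A$3$4*A$4$2 - A$1$3*A$2$2*A$3$1*A$4$4 + A$1$3*A$2$2*A$3$4*A$4$1
 + A$1$3*A$2$4*A$3$1*A$4$2 - A$1$3*A$2$4*A$3$2*A$4$1
 - A$1$4*A$2$1*A$3$2*A$4$3 + A$1$4*A$2$1*A$3$3*A$4$2 + A$1$4*A$2$2*A$3$1*A$4$3 - A$1$4*A$2$2*A$3$3*A$4$1
 - A$1$4*A$2$3*A$3$1*A$4$2 + A$1$4*A$2$3*A$3$2*A$4$1"
proof -
  have f1: "finite {2::4, 3, 4}" "1 \<notin> {2::4, 3, 4}"
    and f2: "finite {3::4, 4}" "2 \<notin> {3::4, 4}"
    and f3: "finite {4::4}" "3 \<notin> {4::4}"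
    by auto
  show ?thesis
    unfolding det_def UNIV_4
    unfolding sum_over_permutations_insert[OF f1]
    unfolding sum_over_permutations_insert[OF f2]
    unfolding sum_over_permutations_insert[OF f3]
    unfolding permutes_sing
    by (simp add: sign_swap_id permutation_swap_id sign_compose swap_id_eq permutation_compose
        algebra_simps)
qed

definition witness_quadric :: "complex \<Rightarrow> complex \<Rightarrow> complex \<Rightarrow> complex^4^4" where
  "witness_quadric a b c = (\<chi> i j. if i = j then 1
     else if (i, j) \<in> {(1, 2), (2, 1)} then a
     else if (i, j) \<in> {(1, 3), (3, 1)} then b
     else if (i, j) \<in> {(2, 3), (3, 2)} then c else 0)"

definition witness_conic :: "complex \<Rightarrow> complex^3^3" where
  "witness_conic t = (\<chi> i j. if i = j then 1 else if (i, j) \<in> {(1, 2), (2, 1)} then t else 0)"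

definition coord_plane1 :: "complex^3^4" where
  "coord_plane1 = (\<chi> i j. if (i, j) \<in> {(2, 1), (3, 2), (4, 3)} then 1 else 0)"

definition coord_plane2 :: "complex^3^4" where
  "coord_plane2 = (\<chi> i j. if (i, j) \<in> {(1, 1), (3, 2), (4, 3)} then 1 else 0)"

definition coord_plane3 :: "complex^3^4" where
  "coord_plane3 = (\<chi> i j. if (i, j) \<in> {(1, 1), (2, 2), (4, 3)} then 1 else 0)"

lemma coord_plane1_mult:
  "coord_plane1 *v x = (\<chi> i. if i = 1 then 0 else if i = 2 then x$1 else if i = 3 then x$2 else x$3)"
  by (auto simp: coord_plane1_def vec_eq_iff matrix_vector_mult_def sum_3 forall_4)

lemma coord_plane2_mult:
  "coord_plane2 *v x = (\<chi> i. if i = 1 then x$1 else if i = 2 then 0 else if i = 3 then x$2 else x$3)"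
  by (auto simp: coord_plane2_def vec_eq_iff matrix_vector_mult_def sum_3 forall_4)

lemma coord_plane3_mult:
  "coord_plane3 *v x = (\<chi> i. if i = 1 then x$1 else if i = 2 then x$2 else if i = 3 then 0 else x$3)"
  by (auto simp: coord_plane3_def vec_eq_iff matrix_vector_mult_def sum_3 forall_4)

lemmas coord_plane_mult = coord_plane1_mult coord_plane2_mult coord_plane3_mult

lemma range_coord_plane1: "range ((*v) coord_plane1) = {X. X $ 1 = 0}"
proof (intro equalityI subsetI)
  fix X :: "complex^4" assume "X \<in> {X. X $ 1 = 0}"
  then have "X = coord_plane1 *v vector [X$2, X$3, X$4]"
    by (auto simp: coord_plane1_mult vec_eq_iff forall_4)
  then show "X \<in> range ((*v) coord_plane1)" by (rule range_eqI)
qed (auto simp: coord_plane1_mult)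

lemma range_coord_plane2: "range ((*v) coord_plane2) = {X. X $ 2 = 0}"
proof (intro equalityI subsetI)
  fix X :: "complex^4" assume "X \<in> {X. X $ 2 = 0}"
  then have "X = coord_plane2 *v vector [X$1, X$3, X$4]"
    by (auto simp: coord_plane2_mult vec_eq_iff forall_4)
  then show "X \<in> range ((*v) coord_plane2)" by (rule range_eqI)
qed (auto simp: coord_plane2_mult)

lemma range_coord_plane3: "range ((*v) coord_plane3) = {X. X $ 3 = 0}"
proof (intro equalityI subsetI)
  fix X :: "complex^4" assume "X \<in> {X. X $ 3 = 0}"
  then have "X = coord_plane3 *v vector [X$1, X$2, X$4]"
    by (auto simp: coord_plane3_mult vec_eq_iff forall_4)
  then show "X \<in> range ((*v) coord_plane3)" by (rule range_eqI)
qed (auto simp: coord_plane3_mult)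

lemma plane_param_coord_planes:
  "plane_param coord_plane1" "plane_param coord_plane2" "plane_param coord_plane3"
  by (auto simp: plane_param_def coord_plane_mult vec_eq_iff forall_4 forall_3)

lemma isect_line_coord_planes:
  "isect_line coord_plane1 coord_plane2 (axis 1 1)" "isect_line coord_plane1 coord_plane3 (axis 2 1)"
  "isect_line coord_plane2 coord_plane1 (axis 1 1)" "isect_line coord_plane2 coord_plane3 (axis 2 1)"
  "isect_line coord_plane3 coord_plane1 (axis 1 1)" "isect_line coord_plane3 coord_plane2 (axis 2 1)"
  by (auto intro!: isect_lineI[OF _ range_coord_plane1] isect_lineI[OF _ range_coord_plane2]
      isect_lineI[OF _ range_coord_plane3] simp: coord_plane_mult lform_axis)

lemma witness_conics_on_quadric:
  "conic_on_quadric coord_plane1 (witness_conic c) (witness_quadric a b c)"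
  "conic_on_quadric coord_plane2 (witness_conic b) (witness_quadric a b c)"
  "conic_on_quadric coord_plane3 (witness_conic a) (witness_quadric a b c)"
  by (rule conic_on_quadricI;
      simp add: coord_plane_mult bform_def witness_quadric_def witness_conic_def sum_3 sum_4
        algebra_simps)+

lemma nondeg_conic_witness_conic: "nondeg_conic (witness_conic t) \<longleftrightarrow> t\<^sup>2 \<noteq> 1"
  by (auto simp: nondeg_conic_def det_3 witness_conic_def vec_eq_iff transpose_def forall_3
      power2_eq_square)

lemma nondeg_quadric_witness_quadric:
  "nondeg_quadric (witness_quadric a b c) \<longleftrightarrow> 1 - a\<^sup>2 - b\<^sup>2 - c\<^sup>2 + 2 * a * b * c \<noteq> 0"
  unfolding nondeg_quadric_def det_4
  by (auto simp: witness_quadric_def vec_eq_iff transpose_def forall_4 power2_eq_square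
      algebra_simps)

lemma adj3_witness_conic:
  "adj3 (witness_conic t) $ 1 $ 1 = 1" "adj3 (witness_conic t) $ 2 $ 2 = 1"
  "adj3 (witness_conic t) $ 1 $ 2 = - t"
  by (simp_all add: adj3_def witness_conic_def)

lemma alpha_sq_witness_conic: "alpha_sq (witness_conic t) (axis 1 1) (axis 2 1) = t\<^sup>2"
  by (simp add: alpha_sq_def bform_axis adj3_witness_conic)

lemma alpha_defined_witness_conic: "alpha_defined (witness_conic t) (axis 1 1) (axis 2 1)"
  by (simp add: alpha_defined_def bform_axis adj3_witness_conic)

lemma V3_data_witness:
  assumes "1 - a\<^sup>2 - b\<^sup>2 - c\<^sup>2 + 2 * a * b * c \<noteq> 0" and "a\<^sup>2 \<noteq> 1" "b\<^sup>2 \<noteq> 1" "c\<^sup>2 \<noteq> 1"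
  shows "V3_data (witness_quadric a b c) coord_plane1 coord_plane2 coord_plane3
    (witness_conic c) (witness_conic b) (witness_conic a)
    (axis 1 1) (axis 2 1) (axis 1 1) (axis 2 1) (axis 1 1) (axis 2 1)"
  using assms plane_param_coord_planes witness_conics_on_quadric isect_line_coord_planes
  by (simp add: V3_data_def nondeg_quadric_witness_quadric nondeg_conic_witness_conic
      alpha_defined_witness_conic)

lemma V3_data_witness_real:
  fixes a b c :: real
  assumes "a \<in> {0<..<1/2}" "b \<in> {0<..<1/2}" "c \<in> {0<..<1/2}"
  shows "V3_data (witness_quadric a b c) coord_plane1 coord_plane2 coord_plane3
    (witness_conic c) (witness_conic b) (witness_conic a)
    (axis 1 1) (axis 2 1) (axis 1 1) (axis 2 1) (axis 1 1) (axis 2 1)"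
proof -
  have "t\<^sup>2 < 1/4" if "t \<in> {0<..<1/2}" for t :: real
    using that power_strict_mono[of t "1/2" 2] by (simp add: power_divide)
  then have squares: "a\<^sup>2 < 1/4" "b\<^sup>2 < 1/4" "c\<^sup>2 < 1/4"
    using assms by blast+
  moreover have "0 < a * b * c"
    using assms by simp
  ultimately have "1 - a\<^sup>2 - b\<^sup>2 - c\<^sup>2 + 2 * a * b * c \<noteq> 0"
    by linarith
  then have "complex_of_real (1 - a\<^sup>2 - b\<^sup>2 - c\<^sup>2 + 2 * a * b * c) \<noteq> 0"
    unfolding of_real_eq_0_iff .
  moreover have "complex_of_real (t\<^sup>2) \<noteq> 1" if "t\<^sup>2 < 1/4" for t
    using that by (simp only: of_real_eq_1_iff)
  ultimately show ?thesis
    using squares by (intro V3_data_witness) simp_all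
qed

lemma sqrt_in_half_interval: "x \<in> {0<..<1/4} \<Longrightarrow> sqrt x \<in> {0<..<1/2}"
  using real_sqrt_less_iff[of x "1/4"] by (simp add: real_sqrt_divide)

theorem mainTheorem4:
  fixes S :: "(nat\<times>nat\<times>nat) set" and c :: "nat\<times>nat\<times>nat \<Rightarrow> complex"
  assumes "finite S"
    and "\<And>Q M1 M2 M3 C1 C2 C3 l12 l13 l21 l23 l31 l32.
           V3_data Q M1 M2 M3 C1 C2 C3 l12 l13 l21 l23 l31 l32 \<Longrightarrow>
           poly3_eval S c (alpha_sq C1 l12 l13) (alpha_sq C2 l21 l23) (alpha_sq C3 l31 l32) = 0"
  shows "\<forall>e\<in>S. c e = 0"
proof (rule poly3_eval_eq_0_on_box_imp_coeffs_eq_0[OF assms(1), of "1/4"])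
  fix x y z :: real
  assume "x \<in> {0<..<1/4}" "y \<in> {0<..<1/4}" "z \<in> {0<..<1/4}"
  then have "V3_data (witness_quadric (sqrt z) (sqrt y) (sqrt x)) coord_plane1 coord_plane2 coord_plane3
    (witness_conic (sqrt x)) (witness_conic (sqrt y)) (witness_conic (sqrt z))
    (axis 1 1) (axis 2 1) (axis 1 1) (axis 2 1) (axis 1 1) (axis 2 1)"
    by (intro V3_data_witness_real sqrt_in_half_interval)
  from assms(2)[OF this] show "poly3_eval S c (of_real x) (of_real y) (of_real z) = 0"
    using \<open>x \<in> {0<..<1/4}\<close> \<open>y \<in> {0<..<1/4}\<close> \<open>z \<in> {0<..<1/4}\<close>
    by (simp add: alpha_sq_witness_conic flip: of_real_power)
qed simp

end
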